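(* Let $0<t\le k<n$ be such that a Steiner system $S(t,k,n)$ exists. Then $$q'_0(t,k,n)\le \frac{\binom{n-1}{t-1}}{\binom{k-1}{t-1}}+1,\qquad q''_0(t,k,n)\le \frac{\binom{n}{t}}{\binom{k}{t}}-\frac{\binom{n-1}{t-1}}{\binom{k-1}{t-1}}+1.$$
   Context: $\mathbb{Z}_q=\{0,\dots,q-1\}$ (an alphabet); $\mathrm{wt}$ = number of nonzero coordinates; $d$ = Hamming distance; $J_q(n,w)$ = weight-$w$ words of $\mathbb{Z}_q^n$. An $(n,w,d)_q$ code of size $M$ is a subset $C\subseteq J_q(n,w)$ with $|C|=M$ and pairwise distances at least $d$. A Steiner system $S(t,k,n)$ is a pair $(N,B)$, $|N|=n$, $B$ a set of $k$-subsets (blocks) of $N$ with every $t$-subset of $N$ in exactly one block. For $t,k,n$ such that an $S(t,k,n)$ exists: $q'_0(t,k,n)$ is the smallest $q$ for which an $(n,k,2k-t+1)_q$ code of size $\binom{n}{t}/\binom{k}{t}$ exists, and $q''_0(t,k,n)$ is the smallest $q$ for which an $(n,n-k,n-t+1)_q$ code of size $\binom{n}{t}/\binom{k}{t}$ exists. *)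

theory Defs
  imports Complex_Main
begin

text \<open>Words of Z_q^n: functions x :: nat => nat with x i < q for i < n and
 x i = 0 for i >= n (canonical representation of length-n words).\<close>

definition words :: "nat \<Rightarrow> nat \<Rightarrow> (nat \<Rightarrow> nat) set" where
  "words q n = {x. (\<forall>i<n. x i < q) \<and> (\<forall>i\<ge>n. x i = 0)}"

definition wt :: "nat \<Rightarrow> (nat \<Rightarrow> nat) \<Rightarrow> nat" where
  "wt n x = card {i. i < n \<and> x i \<noteq> 0}"

definition hdist :: "nat \<Rightarrow> (nat \<Rightarrow> nat) \<Rightarrow> (nat \<Rightarrow> nat) \<Rightarrow> nat" where
  "hdist n x y = card {i. i < n \<and> x i \<noteq> y i}"

definition J :: "nat \<Rightarrow> nat \<Rightarrow> nat \<Rightarrow> (nat \<Rightarrow> nat) set" where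
  "J q n w = {x \<in> words q n. wt n x = w}"

definition is_code :: "nat \<Rightarrow> nat \<Rightarrow> nat \<Rightarrow> nat \<Rightarrow> nat \<Rightarrow> (nat \<Rightarrow> nat) set \<Rightarrow> bool" where
  "is_code n w d q M C \<longleftrightarrow> C \<subseteq> J q n w \<and> finite C \<and> card C = M \<and>
     (\<forall>x\<in>C. \<forall>y\<in>C. x \<noteq> y \<longrightarrow> hdist n x y \<ge> d)"

definition steiner_system :: "nat \<Rightarrow> nat \<Rightarrow> nat \<Rightarrow> 'a set \<Rightarrow> 'a set set \<Rightarrow> bool" where
  "steiner_system t k n N B \<longleftrightarrow> finite N \<and> card N = n \<and>
     (\<forall>b\<in>B. b \<subseteq> N \<and> card b = k) \<and>
     (\<forall>T. T \<subseteq> N \<and> card T = t \<longrightarrow> (\<exists>!b. b \<in> B \<and> T \<subseteq> b))"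

definition steiner_exists :: "nat \<Rightarrow> nat \<Rightarrow> nat \<Rightarrow> bool" where
  "steiner_exists t k n \<longleftrightarrow> (\<exists>(N::nat set) B. steiner_system t k n N B)"

text \<open>Steiner size binom(n,t)/binom(k,t) (an integer when S(t,k,n) exists).\<close>
definition steiner_size :: "nat \<Rightarrow> nat \<Rightarrow> nat \<Rightarrow> nat" where
  "steiner_size t k n = (n choose t) div (k choose t)"

definition q0' :: "nat \<Rightarrow> nat \<Rightarrow> nat \<Rightarrow> nat" where
  "q0' t k n = (LEAST q. \<exists>C. is_code n k (2*k - t + 1) q (steiner_size t k n) C)"

definition q0'' :: "nat \<Rightarrow> nat \<Rightarrow> nat \<Rightarrow> nat" where
  "q0'' t k n = (LEAST q. \<exists>C. is_code n (n - k) (n - t + 1) q (steiner_size t k n) C)"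

end

theory Submission
  imports Defs
begin

text \<open>
  Number the points of a Steiner system \<open>S(t,k,n)\<close> by the coordinates \<open>0..<n\<close>. Every point lies
  on the same number \<open>r = C(n-1,t-1)/C(k-1,t-1)\<close> of blocks, so the blocks through a point can be
  labelled injectively by \<open>1..r\<close>. The word of a block carries at each of its points the label of
  the block there and \<open>0\<close> elsewhere. Two distinct blocks share fewer than \<open>t\<close> points, and at the
  shared points their labels differ, so their words differ on the whole union of the blocks,
  i.e. on more than \<open>2k - t\<close> coordinates. This gives an \<open>(n,k,2k-t+1)\<close> code over an alphabet of
  size \<open>r + 1\<close>. Labelling instead the blocks avoiding a point (there are \<open>|B| - r\<close> of them) and
  using the complements of the blocks gives an \<open>(n,n-k,n-t+1)\<close> code over \<open>|B| - r + 1\<close> symbols.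
\<close>

lemma steiner_system_finite_blocks:
  assumes "steiner_system t k n N B"
  shows "finite B"
proof -
  have "B \<subseteq> Pow N" and "finite N" using assms by (auto simp: steiner_system_def)
  then show ?thesis by (simp add: finite_subset)
qed

lemma steiner_system_block:
  assumes "steiner_system t k n N B" and "b \<in> B"
  shows "b \<subseteq> N" and "card b = k" and "finite b"
  using assms by (auto simp: steiner_system_def intro: finite_subset)

lemma steiner_system_card_Int_less:
  assumes S: "steiner_system t k n N B" and "b1 \<in> B" "b2 \<in> B" "b1 \<noteq> b2"
  shows "card (b1 \<inter> b2) < t"
proof (rule ccontr)
  assume "\<not> card (b1 \<inter> b2) < t"
  then obtain T where T: "T \<subseteq> b1 \<inter> b2" "card T = t"
    by (meson not_less obtain_subset_with_card_n)
  moreover have "T \<subseteq> N" using S T \<open>b1 \<in> B\<close> by (auto simp: steiner_system_def)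
  ultimately have "\<exists>!b. b \<in> B \<and> T \<subseteq> b" using S by (simp add: steiner_system_def)
  with T assms(2-4) show False by blast
qed

lemma steiner_system_card_blocks:
  assumes S: "steiner_system t k n N B"
  shows "card B * (k choose t) = n choose t"
proof -
  have fN: "finite N" and cN: "card N = n"
    and unique: "\<And>T. T \<subseteq> N \<Longrightarrow> card T = t \<Longrightarrow> \<exists>!b. b \<in> B \<and> T \<subseteq> b"
    using S by (auto simp: steiner_system_def)
  note block = steiner_system_block[OF S]
  define sub where "sub b = {T. T \<subseteq> b \<and> card T = t}" for b :: "'a set"
  have card_sub: "card (sub b) = k choose t" if "b \<in> B" for b
    using n_subsets[OF block(3)[OF that]] block(2)[OF that] by (simp add: sub_def)
  have "{T. T \<subseteq> N \<and> card T = t} = (\<Union>b\<in>B. sub b)"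
  proof (intro equalityI subsetI)
    fix T assume T: "T \<in> {T. T \<subseteq> N \<and> card T = t}"
    then have "\<exists>!b. b \<in> B \<and> T \<subseteq> b" using unique by simp
    then obtain b where "b \<in> B" "T \<subseteq> b" by blast
    with T show "T \<in> (\<Union>b\<in>B. sub b)" by (auto simp: sub_def)
  next
    fix T assume "T \<in> (\<Union>b\<in>B. sub b)"
    then show "T \<in> {T. T \<subseteq> N \<and> card T = t}" using block(1) by (auto simp: sub_def)
  qed
  then have "n choose t = card (\<Union>b\<in>B. sub b)"
    using n_subsets[OF fN, of t] cN by simp
  also have "\<dots> = (\<Sum>b\<in>B. card (sub b))"
  proof (rule card_UN_disjoint[OF steiner_system_finite_blocks[OF S]])
    show "\<forall>b\<in>B. finite (sub b)"
      using block(3) by (simp add: sub_def)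
    show "\<forall>b1\<in>B. \<forall>b2\<in>B. b1 \<noteq> b2 \<longrightarrow> sub b1 \<inter> sub b2 = {}"
    proof (intro ballI impI)
      fix b1 b2 assume b: "b1 \<in> B" "b2 \<in> B" "b1 \<noteq> b2"
      have "card T < t" if "T \<subseteq> b1 \<inter> b2" for T
        using card_mono[OF _ that] block(3)[OF b(1)] steiner_system_card_Int_less[OF S b] by simp
      then show "sub b1 \<inter> sub b2 = {}" by (auto simp: sub_def)
    qed
  qed
  also have "\<dots> = (\<Sum>b\<in>B. k choose t)"
    using card_sub by (rule sum.cong[OF refl])
  finally show ?thesis by simp
qed

lemma steiner_system_derived:
  assumes S: "steiner_system t k n N B" and "0 < t" and x: "x \<in> N"
  shows "steiner_system (t - 1) (k - 1) (n - 1) (N - {x}) ((\<lambda>b. b - {x}) ` {b \<in> B. x \<in> b})"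
    (is "steiner_system _ _ _ _ ?F")
proof -
  have fN: "finite N" and cN: "card N = n"
    and unique: "\<And>T. T \<subseteq> N \<Longrightarrow> card T = t \<Longrightarrow> \<exists>!b. b \<in> B \<and> T \<subseteq> b"
    using S by (auto simp: steiner_system_def)
  have derived_blocks: "b' \<subseteq> N - {x} \<and> card b' = k - 1" if b': "b' \<in> ?F" for b'
  proof -
    obtain b where "b \<in> B" "x \<in> b" "b' = b - {x}" using b' by blast
    with steiner_system_block[OF S] show ?thesis by auto
  qed
  have derived_unique: "\<exists>!b'. b' \<in> ?F \<and> T \<subseteq> b'" if T: "T \<subseteq> N - {x}" "card T = t - 1" for T
  proof -
    have "finite T" using T fN by (meson finite_Diff finite_subset)
    moreover have "x \<notin> T" using T by blast
    ultimately have "card (insert x T) = t" using T \<open>0 < t\<close> by simp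
    then have "\<exists>!b. b \<in> B \<and> insert x T \<subseteq> b" using T x by (intro unique) auto
    then obtain b where b: "b \<in> B \<and> insert x T \<subseteq> b"
      and b_unique: "\<And>b'. b' \<in> B \<and> insert x T \<subseteq> b' \<Longrightarrow> b' = b" by (elim ex1E) blast
    show ?thesis
    proof (rule ex1I[of _ "b - {x}"])
      show "b - {x} \<in> ?F \<and> T \<subseteq> b - {x}" using b T by blast
      show "b' = b - {x}" if "b' \<in> ?F \<and> T \<subseteq> b'" for b'
        using that b_unique by blast
    qed
  qed
  show ?thesis
    using fN cN x derived_blocks derived_unique by (simp add: steiner_system_def)
qed

lemma steiner_system_replication:
  assumes S: "steiner_system t k n N B" and "0 < t" and x: "x \<in> N"
  shows "card {b \<in> B. x \<in> b} * (k - 1 choose (t - 1)) = n - 1 choose (t - 1)"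
proof -
  have "inj_on (\<lambda>b. b - {x}) {b \<in> B. x \<in> b}"
    by (rule inj_onI) (metis insert_Diff mem_Collect_eq)
  then have "card ((\<lambda>b. b - {x}) ` {b \<in> B. x \<in> b}) = card {b \<in> B. x \<in> b}"
    by (rule card_image)
  with steiner_system_card_blocks[OF steiner_system_derived[OF assms]] show ?thesis by simp
qed

lemma card_Collect_bij_betw:
  fixes n :: nat
  assumes "bij_betw f {0..<n} N"
  shows "card {i. i < n \<and> Q (f i)} = card {p \<in> N. Q p}"
proof -
  have "{p \<in> N. Q p} = f ` {i. i < n \<and> Q (f i)}"
    using assms by (auto simp: bij_betw_def)
  moreover have "inj_on f {i. i < n \<and> Q (f i)}"
    using assms by (rule bij_betw_imp_inj_on[THEN inj_on_subset]) auto
  ultimately show ?thesis by (simp add: card_image)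
qed

lemma ex_inj_on_less_card:
  assumes "\<And>p. finite (A p)"
  shows "\<exists>H. \<forall>p. inj_on (H p) (A p) \<and> (\<forall>a\<in>A p. H p a < card (A p))"
proof -
  have "\<exists>h :: _ \<Rightarrow> nat. inj_on h (A p) \<and> (\<forall>a\<in>A p. h a < card (A p))" for p
  proof -
    obtain h where "bij_betw h (A p) {0..<card (A p)}"
      using ex_bij_betw_finite_nat[OF assms] by blast
    then show ?thesis by (intro exI[of _ h]) (auto simp: bij_betw_def)
  qed
  then show ?thesis by metis
qed

lemma incidence_code:
  fixes N :: "'a set" and B :: "'b set" and P :: "'a \<Rightarrow> 'b \<Rightarrow> bool"
  assumes fN: "finite N" and cN: "card N = n" and fB: "finite B"
    and deg: "\<And>p. p \<in> N \<Longrightarrow> card {b \<in> B. P p b} \<le> m"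
    and wt: "\<And>b. b \<in> B \<Longrightarrow> card {p \<in> N. P p b} = w"
    and dist: "\<And>b1 b2. b1 \<in> B \<Longrightarrow> b2 \<in> B \<Longrightarrow> b1 \<noteq> b2 \<Longrightarrow> d \<le> card {p \<in> N. P p b1 \<or> P p b2}"
    and "0 < d"
  shows "\<exists>C. is_code n w d (Suc m) (card B) C"
proof -
  obtain f where f: "bij_betw f {0..<n} N"
    using ex_bij_betw_nat_finite[OF fN] cN by blast
  have fN_f: "f i \<in> N" if "i < n" for i
    using f that by (auto dest: bij_betwE)
  obtain H where H_inj: "\<And>p. inj_on (H p) {b \<in> B. P p b}"
    and H_less: "\<And>p. \<forall>b\<in>{b \<in> B. P p b}. H p b < card {b \<in> B. P p b}"
    using ex_inj_on_less_card[of "\<lambda>p. {b \<in> B. P p b}"] fB by auto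
  define c where "c b i = (if i < n \<and> P (f i) b then Suc (H (f i) b) else 0)" for b i
  have diff: "{i. i < n \<and> c b1 i \<noteq> c b2 i} = {i. i < n \<and> (P (f i) b1 \<or> P (f i) b2)}"
    if "b1 \<in> B" "b2 \<in> B" "b1 \<noteq> b2" for b1 b2
    using that inj_onD[OF H_inj] by (auto simp: c_def)
  have hd: "d \<le> hdist n (c b1) (c b2)" if "b1 \<in> B" "b2 \<in> B" "b1 \<noteq> b2" for b1 b2
    using dist[OF that] card_Collect_bij_betw[OF f, of "\<lambda>p. P p b1 \<or> P p b2"]
    by (simp add: hdist_def diff[OF that])
  have "inj_on c B"
  proof (rule inj_onI, rule ccontr)
    fix b1 b2 assume "b1 \<in> B" "b2 \<in> B" "c b1 = c b2" "b1 \<noteq> b2"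
    with hd[of b1 b2] \<open>0 < d\<close> show False by (simp add: hdist_def)
  qed
  moreover have "c b \<in> J (Suc m) n w" if b: "b \<in> B" for b
  proof -
    have "c b i < Suc m" if "i < n" for i
      using H_less[of "f i"] deg[OF fN_f[OF that]] b by (auto simp: c_def)
    then have "c b \<in> words (Suc m) n" by (simp add: words_def c_def)
    have "{i. i < n \<and> c b i \<noteq> 0} = {i. i < n \<and> P (f i) b}"
      by (auto simp: c_def)
    then have "wt n (c b) = w"
      using card_Collect_bij_betw[OF f, of "\<lambda>p. P p b"] wt[OF b] by (simp add: wt_def)
    with \<open>c b \<in> words (Suc m) n\<close> show ?thesis by (simp add: J_def)
  qed
  ultimately have "is_code n w d (Suc m) (card B) (c ` B)"
    using fB hd by (auto simp: is_code_def card_image)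
  then show ?thesis by blast
qed

lemma steiner_system_block_code:
  assumes S: "steiner_system t k n N B" and "t \<le> k"
    and rep: "\<And>x. x \<in> N \<Longrightarrow> card {b \<in> B. x \<in> b} = r"
  shows "\<exists>C. is_code n k (2 * k - t + 1) (Suc r) (card B) C"
proof (rule incidence_code[where P = "(\<in>)"])
  note block = steiner_system_block[OF S]
  show "finite N" "card N = n" "finite B"
    using S steiner_system_finite_blocks by (auto simp: steiner_system_def)
  show "card {b \<in> B. p \<in> b} \<le> r" if "p \<in> N" for p using rep[OF that] by simp
  show "card {p \<in> N. p \<in> b} = k" if "b \<in> B" for b
  proof -
    have "{p \<in> N. p \<in> b} = b" using block(1)[OF that] by blast
    then show ?thesis using block(2)[OF that] by simp
  qed
  show "2 * k - t + 1 \<le> card {p \<in> N. p \<in> b1 \<or> p \<in> b2}"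
    if b: "b1 \<in> B" "b2 \<in> B" "b1 \<noteq> b2" for b1 b2
  proof -
    have "{p \<in> N. p \<in> b1 \<or> p \<in> b2} = b1 \<union> b2" using block(1) b by auto
    moreover have "card (b1 \<union> b2) + card (b1 \<inter> b2) = 2 * k"
      using card_Un_Int[of b1 b2] block b by simp
    ultimately show ?thesis
      using steiner_system_card_Int_less[OF S b] \<open>t \<le> k\<close> by simp
  qed
qed simp

lemma steiner_system_complement_code:
  assumes S: "steiner_system t k n N B" and "t \<le> k"
    and rep: "\<And>x. x \<in> N \<Longrightarrow> card {b \<in> B. x \<in> b} = r"
  shows "\<exists>C. is_code n (n - k) (n - t + 1) (Suc (card B - r)) (card B) C"
proof (rule incidence_code[where P = "\<lambda>p b. p \<notin> b"])
  note block = steiner_system_block[OF S]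
  have fN: "finite N" and cN: "card N = n" using S by (auto simp: steiner_system_def)
  have fB: "finite B" using S by (rule steiner_system_finite_blocks)
  then show "finite N" "card N = n" "finite B" using fN cN by simp_all
  show "card {b \<in> B. p \<notin> b} \<le> card B - r" if "p \<in> N" for p
  proof -
    have "{b \<in> B. p \<notin> b} = B - {b \<in> B. p \<in> b}" by blast
    then show ?thesis using card_Diff_subset[of "{b \<in> B. p \<in> b}" B] fB rep[OF that] by simp
  qed
  show "card {p \<in> N. p \<notin> b} = n - k" if "b \<in> B" for b
  proof -
    have "{p \<in> N. p \<notin> b} = N - b" by blast
    then show ?thesis
      using card_Diff_subset[of b N] block[OF that] cN by simp
  qed
  show "n - t + 1 \<le> card {p \<in> N. p \<notin> b1 \<or> p \<notin> b2}"
    if b: "b1 \<in> B" "b2 \<in> B" "b1 \<noteq> b2" for b1 b2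
  proof -
    have "{p \<in> N. p \<notin> b1 \<or> p \<notin> b2} = N - (b1 \<inter> b2)" by blast
    moreover have "b1 \<inter> b2 \<subseteq> N" using block(1) b by blast
    ultimately have "card {p \<in> N. p \<notin> b1 \<or> p \<notin> b2} = n - card (b1 \<inter> b2)"
      using card_Diff_subset[of "b1 \<inter> b2" N] block(3)[OF b(1)] cN by simp
    moreover have "k \<le> n"
      using card_mono[OF fN block(1)[OF b(1)]] block(2)[OF b(1)] cN by simp
    ultimately show ?thesis using steiner_system_card_Int_less[OF S b] \<open>t \<le> k\<close> by simp
  qed
qed simp

theorem mainTheorem7:
  fixes t k n :: nat
  assumes "0 < t" "t \<le> k" "k < n" "steiner_exists t k n"
  shows "(\<exists>q C. is_code n k (2*k - t + 1) q (steiner_size t k n) C) \<and>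
         real (q0' t k n) \<le> real (n - 1 choose (t - 1)) / real (k - 1 choose (t - 1)) + 1 \<and>
         (\<exists>q C. is_code n (n - k) (n - t + 1) q (steiner_size t k n) C) \<and>
         real (q0'' t k n) \<le> real (n choose t) / real (k choose t)
              - real (n - 1 choose (t - 1)) / real (k - 1 choose (t - 1)) + 1"
proof -
  obtain N :: "nat set" and B where S: "steiner_system t k n N B"
    using assms(4) by (auto simp: steiner_exists_def)
  have "k choose t > 0" "k - 1 choose (t - 1) > 0" using assms(1,2) by simp_all
  define r where "r = (n - 1 choose (t - 1)) div (k - 1 choose (t - 1))"
  have rep: "card {b \<in> B. x \<in> b} = r" if "x \<in> N" for x
    using steiner_system_replication[OF S assms(1) that] \<open>k - 1 choose (t - 1) > 0\<close>
    unfolding r_def by (metis gr_implies_not0 nonzero_mult_div_cancel_right)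
  have "N \<noteq> {}" using S assms(3) by (auto simp: steiner_system_def)
  then obtain x where x: "x \<in> N" by blast
  have r_real: "real r = real (n - 1 choose (t - 1)) / real (k - 1 choose (t - 1))"
    using steiner_system_replication[OF S assms(1) x] rep[OF x] \<open>k - 1 choose (t - 1) > 0\<close>
    by (simp add: field_simps flip: of_nat_mult)
  have card_B: "card B * (k choose t) = n choose t" using S by (rule steiner_system_card_blocks)
  then have size: "steiner_size t k n = card B"
    using \<open>k choose t > 0\<close> unfolding steiner_size_def by (metis gr_implies_not0 nonzero_mult_div_cancel_right)
  have B_real: "real (card B) = real (n choose t) / real (k choose t)"
    using card_B \<open>k choose t > 0\<close> by (simp add: field_simps flip: of_nat_mult)
  have "r \<le> card B"
    using card_mono[OF steiner_system_finite_blocks[OF S], of "{b \<in> B. x \<in> b}"] rep[OF x] by auto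
  obtain C1 where C1: "is_code n k (2 * k - t + 1) (Suc r) (steiner_size t k n) C1"
    using steiner_system_block_code[OF S assms(2) rep] size by auto
  obtain C2 where C2: "is_code n (n - k) (n - t + 1) (Suc (card B - r)) (steiner_size t k n) C2"
    using steiner_system_complement_code[OF S assms(2) rep] size by auto
  have "q0' t k n \<le> Suc r"
    unfolding q0'_def by (rule Least_le) (use C1 in blast)
  then have "real (q0' t k n) \<le> real r + 1" by simp
  moreover have "q0'' t k n \<le> Suc (card B - r)"
    unfolding q0''_def by (rule Least_le) (use C2 in blast)
  then have "real (q0'' t k n) \<le> real (card B) - real r + 1"
    using \<open>r \<le> card B\<close> by (simp add: of_nat_diff)
  ultimately show ?thesis
    using C1 C2 unfolding r_real B_real by blast
qed

end
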